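(* Let $q\ge 3$, $r\in\mathbb{N}$ with $r\le q-2$, $s\in\mathbb{N}$, and let $Y_s=\{y_i\}_{i=1}^{2s}$ be any collection of points with $y_{2s}<\cdots<y_1<y_{2s}+2\pi=:y_0$. Then there exists a function $f\in\Delta^{(q)}(Y_s)\cap W^{r}$ such that $$E_n^{(q)}(f,Y_s)\ge C(q,Y_s),\qquad n\in\mathbb{N},$$ where $C(q,Y_s)>0$ depends only on $q$ and $Y_s$.
   Context: A function $f\in C[a,b]$ is called $q$-monotone ($q\ge 2$) if $f\in C^{q-2}(a,b)$ and $f^{(q-2)}$ is convex on $(a,b)$. For $Y_s$ as in the claim, $\Delta^{(q)}(Y_s)$ denotes the set of continuous $2\pi$-periodic functions $f:\mathbb{R}\to\mathbb{R}$ such that $(-1)^{i-1}f$ is $q$-monotone on $[y_i,y_{i-1}]$ for each $1\le i\le 2s$. For $r\in\mathbb{N}$, $W^r$ denotes the class of $2\pi$-periodic functions $f$ with $f^{(r-1)}$ locally absolutely continuous on $\mathbb{R}$ and $\operatorname{ess\,sup}_{x\in\mathbb{R}}|f^{(r)}(x)|\le 2$. $\mathcal{T}_n$ is the space of real trigonometric polynomials of degree $\le n$. For a continuous $2\pi$-periodic $g$, $\|g\|=\max_{x\in\mathbb{R}}|g(x)|$, and $E_n^{(q)}(g,Y_s):=\inf_{T_n\in\mathcal{T}_n\cap\Delta^{(q)}(Y_s)}\|g-T_n\|$. *)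

theory Defs
  imports "HOL-Analysis.Analysis"
begin

definition periodic_2pi :: "(real \<Rightarrow> real) \<Rightarrow> bool" where
  "periodic_2pi f \<longleftrightarrow> (\<forall>x. f (x + 2 * pi) = f x)"

definition deriv_chain :: "nat \<Rightarrow> real set \<Rightarrow> (real \<Rightarrow> real) \<Rightarrow> (nat \<Rightarrow> real \<Rightarrow> real) \<Rightarrow> bool" where
  "deriv_chain k S f g \<longleftrightarrow>
     (\<forall>x\<in>S. g 0 x = f x) \<and>
     (\<forall>j<k. \<forall>x\<in>S. (g j has_real_derivative g (Suc j) x) (at x)) \<and>
     continuous_on S (g k)"

definition q_monotone :: "nat \<Rightarrow> real \<Rightarrow> real \<Rightarrow> (real \<Rightarrow> real) \<Rightarrow> bool" where
  "q_monotone q a b f \<longleftrightarrow>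
     continuous_on {a..b} f \<and>
     (\<exists>g. deriv_chain (q - 2) {a<..<b} f g \<and> convex_on {a<..<b} (g (q - 2)))"

text \<open>Delta^(q)(Y_s), with the points given as y 0, ..., y (2s).\<close>
definition Delta_q :: "nat \<Rightarrow> nat \<Rightarrow> (nat \<Rightarrow> real) \<Rightarrow> (real \<Rightarrow> real) \<Rightarrow> bool" where
  "Delta_q q s y f \<longleftrightarrow>
     continuous_on UNIV f \<and> periodic_2pi f \<and>
     (\<forall>i\<in>{1 .. 2 * s}. q_monotone q (y i) (y (i - 1)) (\<lambda>x. (-1) ^ (i - 1) * f x))"

definition abs_cont_on :: "real \<Rightarrow> real \<Rightarrow> (real \<Rightarrow> real) \<Rightarrow> bool" where
  "abs_cont_on a b g \<longleftrightarrow>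
     (\<forall>\<epsilon>>0. \<exists>\<delta>>0. \<forall>(n::nat) (u::nat \<Rightarrow> real) (v::nat \<Rightarrow> real).
        (\<forall>k<n. a \<le> u k \<and> u k \<le> v k \<and> v k \<le> b) \<and>
        (\<forall>i<n. \<forall>j<n. i \<noteq> j \<longrightarrow> v i \<le> u j \<or> v j \<le> u i) \<and>
        (\<Sum>k<n. v k - u k) < \<delta>
        \<longrightarrow> (\<Sum>k<n. \<bar>g (v k) - g (u k)\<bar>) < \<epsilon>)"

definition locally_abs_cont :: "(real \<Rightarrow> real) \<Rightarrow> bool" where
  "locally_abs_cont g \<longleftrightarrow> (\<forall>a b. abs_cont_on a b g)"

definition W_class :: "nat \<Rightarrow> (real \<Rightarrow> real) \<Rightarrow> bool" where
  "W_class r f \<longleftrightarrow> periodic_2pi f \<and>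
     (\<exists>g. (\<forall>x. g 0 x = f x) \<and>
          (\<forall>j<r - 1. \<forall>x. (g j has_real_derivative g (Suc j) x) (at x)) \<and>
          locally_abs_cont (g (r - 1)) \<and>
          (AE x in lborel. \<exists>D. (g (r - 1) has_real_derivative D) (at x) \<and> \<bar>D\<bar> \<le> 2))"

definition trig_poly :: "nat \<Rightarrow> (real \<Rightarrow> real) \<Rightarrow> bool" where
  "trig_poly n T \<longleftrightarrow> (\<exists>(a::nat \<Rightarrow> real) (b::nat \<Rightarrow> real).
     \<forall>x. T x = a 0 + (\<Sum>k=1..n. a k * cos (real k * x) + b k * sin (real k * x)))"

definition sup_norm :: "(real \<Rightarrow> real) \<Rightarrow> real" where
  "sup_norm g = Sup (range (\<lambda>x. \<bar>g x\<bar>))"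

definition E_q :: "nat \<Rightarrow> nat \<Rightarrow> nat \<Rightarrow> (nat \<Rightarrow> real) \<Rightarrow> (real \<Rightarrow> real) \<Rightarrow> real" where
  "E_q n q s y g = Inf {sup_norm (\<lambda>x. g x - T x) | T. trig_poly n T \<and> Delta_q q s y T}"

end

(*
  The extremal function f is a (q-3)-fold periodic primitive of a 2pi-periodic piecewise
  linear sawtooth whose only kinks are a convex one at y_1 and a concave one at
  y_2s = y_0 - 2pi. Hence f^(q-2) is constant on every (y_i, y_(i-1)), so f lies in
  Delta^(q)(Y_s), and after scaling also in W^r.

  The lower bound comes from one linear functional: L_k g is the k-fold central difference
  with step a of g(x+2d) - 2g(x+d) + 2g(x-d) - g(x-2d), and L = L_(q-2) is evaluated at
  y_1. For a trigonometric polynomial T in Delta^(q)(Y_s), T^(q-2) is convex right of y_1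
  and concave left of it, so the symmetric sum L_0 T^(q-2)(y_1+t) + L_0 T^(q-2)(y_1-t) is
  nonnegative. If S_k(t) = L_k T^(q-2-k)(y_1+t) + L_k T^(q-2-k)(y_1-t) is nonnegative, then
  t -> L_k T^(q-3-k)(y_1+t) - L_k T^(q-3-k)(y_1-t) has derivative S_k(t) and is nondecreasing;
  its increments over intervals of length a are exactly S_(k+1)(t). Hence L T >= 0, whereas
  the convex kink gives L f = -K a^(q-2) < 0. As |L g| <= 6 2^(q-2) ||g||, every admissible
  T satisfies ||f - T|| >= K a^(q-2) / (6 2^(q-2)), independently of n.
*)
theory Submission
  imports Defs "HOL-Library.Periodic_Fun"
begin

section \<open>A difference functional\<close>

fun diff_functional :: "real \<Rightarrow> real \<Rightarrow> nat \<Rightarrow> (real \<Rightarrow> real) \<Rightarrow> real \<Rightarrow> real" where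
  "diff_functional d a 0 g x = g (x + 2*d) - 2 * g (x + d) + 2 * g (x - d) - g (x - 2*d)"
| "diff_functional d a (Suc k) g x =
     diff_functional d a k g (x + a/2) - diff_functional d a k g (x - a/2)"

lemma diff_functional_has_real_derivative:
  assumes "\<And>x. (g has_real_derivative g' x) (at x)"
  shows "(diff_functional d a k g has_real_derivative diff_functional d a k g' x) (at x)"
proof (induction k arbitrary: x)
  case 0
  have "\<And>c. ((\<lambda>x. g (x + c)) has_real_derivative g' (x + c)) (at x)"
    using assms DERIV_shift by blast
  from this[of "2*d"] this[of d] this[of "-d"] this[of "-2*d"] show ?case
    by (auto intro!: derivative_eq_intros)
next
  case (Suc k)
  have "\<And>c. ((\<lambda>x. diff_functional d a k g (x + c)) has_real_derivative
              diff_functional d a k g' (x + c)) (at x)"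
    using Suc DERIV_shift by blast
  from this[of "a/2"] this[of "-a/2"] show ?case
    by (auto intro!: derivative_eq_intros)
qed

lemma diff_functional_diff:
  "diff_functional d a k (\<lambda>x. f x - g x) x = diff_functional d a k f x - diff_functional d a k g x"
  by (induction k arbitrary: x) (auto simp: algebra_simps)

lemma abs_diff_functional_le:
  assumes "\<And>x. \<bar>g x\<bar> \<le> M"
  shows "\<bar>diff_functional d a k g x\<bar> \<le> 6 * 2^k * M"
proof (induction k arbitrary: x)
  case 0
  show ?case using assms[of "x + 2*d"] assms[of "x + d"] assms[of "x - d"] assms[of "x - 2*d"]
    by simp
next
  case (Suc k)
  show ?case using Suc[of "x + a/2"] Suc[of "x - a/2"] by simp
qed

lemma convex_on_reflect_le:
  fixes H :: "real \<Rightarrow> real"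
  assumes "convex_on S H" "u \<in> S" "v \<in> S" "u \<le> x" "x \<le> v"
  shows "H x + H (u + v - x) \<le> H u + H v"
proof (cases "u = v")
  case True
  then show ?thesis using assms by auto
next
  case False
  then have "u < v" using assms by auto
  define t where "t = (x - u) / (v - u)"
  have t: "0 \<le> t" "t \<le> 1" using assms \<open>u < v\<close> by (auto simp: t_def field_simps)
  have "t * (v - u) = x - u" using \<open>u < v\<close> by (simp add: t_def)
  then have x: "x = (1 - t) * u + t * v" and x': "u + v - x = t * u + (1 - t) * v"
    by (simp_all add: algebra_simps)
  have "H x \<le> (1 - t) * H u + t * H v"
    using convex_onD[OF assms(1) t assms(2,3)] x by simp
  moreover have "H (u + v - x) \<le> t * H u + (1 - t) * H v"
    using convex_onD[OF assms(1), of "1 - t" u v] t assms(2,3) x' by simp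
  ultimately show ?thesis by (simp add: algebra_simps)
qed

lemma convex_on_Icc_if_convex_on_open:
  fixes H :: "real \<Rightarrow> real"
  assumes "l < r" "convex_on {l<..<r} H" "continuous_on {l..r} H"
  shows "convex_on {l..r} H"
proof (rule convex_onI)
  fix t x z :: real
  assume t: "0 < t" "t < 1" and xz: "x \<in> {l..r}" "z \<in> {l..r}"
  define \<Phi> where "\<Phi> p = (1 - t) * H (fst p) + t * H (snd p) - H ((1 - t) * fst p + t * snd p)"
    for p :: "real \<times> real"
  have comb: "(1 - t) * u + t * w \<in> {l..r}" if "u \<in> {l..r}" "w \<in> {l..r}" for u w
    using convexD_alt[of "{l..r}" u w t] that t by simp
  have "continuous_on ({l..r} \<times> {l..r}) \<Phi>"
    unfolding \<Phi>_def
    by (intro continuous_intros continuous_on_compose2[OF assms(3)]) (auto intro: comb)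
  moreover have "\<Phi> p \<ge> 0" if "p \<in> {l<..<r} \<times> {l<..<r}" for p
    using convex_onD[OF assms(2), of t "fst p" "snd p"] that t by (auto simp: \<Phi>_def)
  ultimately have "\<Phi> (x, z) \<ge> 0"
    using continuous_ge_on_closure[of "{l<..<r} \<times> {l<..<r}" \<Phi> "(x, z)" 0] assms(1) xz
    by (simp add: closure_Times)
  then show "H ((1 - t) *\<^sub>R x + t *\<^sub>R z) \<le> (1 - t) * H x + t * H z"
    by (simp add: \<Phi>_def)
qed simp

lemma diff_functional_0_inflection_nonneg:
  fixes H :: "real \<Rightarrow> real"
  assumes cv: "convex_on {y..y + 3*d} H" and cc: "concave_on {y - 3*d..y} H" and u: "\<bar>u\<bar> \<le> d"
  shows "diff_functional d a 0 H (y + u) + diff_functional d a 0 H (y - u) \<ge> 0"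
proof -
  define v where "v = \<bar>u\<bar>"
  have v: "0 \<le> v" "v \<le> d" using u by (auto simp: v_def)
  have sym: "diff_functional d a 0 H (y + u) + diff_functional d a 0 H (y - u) =
      diff_functional d a 0 H (y + v) + diff_functional d a 0 H (y - v)"
    by (cases "u \<ge> 0") (auto simp: v_def)
  have cv': "convex_on {y - 3*d..y} (\<lambda>x. - H x)" using cc by (simp add: concave_on_def)
  have "H (y + d + v) + H (y + d - v) \<le> H y + H (y + 2*d)"
    using convex_on_reflect_le[OF cv, of y "y + 2*d" "y + d + v"] v by (auto simp: algebra_simps)
  moreover have "2 * H (y + 2*d) \<le> H (y + 2*d - v) + H (y + 2*d + v)"
    using convex_on_reflect_le[OF cv, of "y + 2*d - v" "y + 2*d + v" "y + 2*d"] v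
    by (auto simp: algebra_simps)
  moreover have "- H (y - d + v) - H (y - d - v) \<le> - H (y - 2*d) - H y"
    using convex_on_reflect_le[OF cv', of "y - 2*d" y "y - d + v"] v by (auto simp: algebra_simps)
  moreover have "- 2 * H (y - 2*d) \<le> - H (y - 2*d - v) - H (y - 2*d + v)"
    using convex_on_reflect_le[OF cv', of "y - 2*d - v" "y - 2*d + v" "y - 2*d"] v
    by (auto simp: algebra_simps)
  ultimately show ?thesis unfolding sym by (simp add: algebra_simps)
qed

lemma diff_functional_Suc_symmetric_nonneg:
  assumes G: "\<And>x. (G has_real_derivative G' x) (at x)" and "a \<ge> 0"
    and nonneg: "\<And>t. \<bar>t\<bar> \<le> \<sigma> \<Longrightarrow>
                   diff_functional d a k G' (y + t) + diff_functional d a k G' (y - t) \<ge> 0"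
    and s: "\<bar>s\<bar> \<le> \<sigma> - a/2"
  shows "diff_functional d a (Suc k) G (y + s) + diff_functional d a (Suc k) G (y - s) \<ge> 0"
proof -
  define \<Phi> where "\<Phi> t = diff_functional d a k G (y + t) - diff_functional d a k G (y - t)" for t
  note L = diff_functional_has_real_derivative[OF G, of d a k]
  have "(\<Phi> has_real_derivative
          diff_functional d a k G' (y + t) + diff_functional d a k G' (y - t)) (at t)" for t
    unfolding \<Phi>_def
    by (auto intro!: derivative_eq_intros DERIV_chain2[OF L])
  then have "\<Phi> (s - a/2) \<le> \<Phi> (s + a/2)"
    using nonneg s \<open>a \<ge> 0\<close> by (intro DERIV_nonneg_imp_nondecreasing[of _ _ \<Phi>]) force+
  then show ?thesis by (simp add: \<Phi>_def algebra_simps)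
qed

lemma diff_functional_nonneg_at_inflection:
  assumes D: "\<And>j x. j < p \<Longrightarrow> (D j has_real_derivative D (Suc j) x) (at x)"
    and cv: "convex_on {y..y + 3*d} (D p)" and cc: "concave_on {y - 3*d..y} (D p)"
    and "a \<ge> 0" and pa: "real p * a \<le> 2 * d"
  shows "diff_functional d a p (D 0) y \<ge> 0"
proof -
  have "diff_functional d a k (D (p - k)) (y + t) + diff_functional d a k (D (p - k)) (y - t) \<ge> 0"
    if "k \<le> p" "\<bar>t\<bar> \<le> d - real k * a / 2" for k t
    using that
  proof (induction k arbitrary: t)
    case 0
    then show ?case using diff_functional_0_inflection_nonneg[OF cv cc] by simp
  next
    case (Suc k)
    have "Suc (p - Suc k) = p - k" using Suc.prems by auto
    then show ?case
      using Suc D[of "p - Suc k"] \<open>a \<ge> 0\<close>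
      by (intro diff_functional_Suc_symmetric_nonneg[where \<sigma> = "d - real k * a / 2"])
         (auto simp: algebra_simps add_divide_distrib)
  qed
  from this[of p 0] show ?thesis using pa by simp
qed

lemma diff_functional_0_kink:
  assumes right: "\<And>x. y \<le> x \<Longrightarrow> x \<le> y + 3*d \<Longrightarrow> H x = H y + \<alpha> * (x - y)"
    and left: "\<And>x. y - 3*d \<le> x \<Longrightarrow> x \<le> y \<Longrightarrow> H x = H y + \<gamma> * (x - y)"
    and z: "\<bar>z - y\<bar> \<le> d"
  shows "diff_functional d a 0 H z = (\<gamma> - \<alpha>) * (z - y)"
  using right[of "z + 2*d"] right[of "z + d"] left[of "z - d"] left[of "z - 2*d"] z
  by (simp add: abs_le_iff algebra_simps)

lemma diff_functional_Suc_linear: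
  assumes G: "\<And>x. (G has_real_derivative G' x) (at x)" and "a > 0"
    and lin: "\<And>t. z - a/2 < t \<Longrightarrow> t < z + a/2 \<Longrightarrow> diff_functional d a k G' t = \<kappa> * (t - y)"
  shows "diff_functional d a (Suc k) G z = \<kappa> * a * (z - y)"
proof -
  define \<Phi> where "\<Phi> t = diff_functional d a k G t - \<kappa> * (t - y)^2 / 2" for t
  have d\<Phi>: "(\<Phi> has_real_derivative diff_functional d a k G' t - \<kappa> * (t - y)) (at t)" for t
    unfolding \<Phi>_def using diff_functional_has_real_derivative[OF G, of d a k t]
    by (auto intro!: derivative_eq_intros simp: field_simps)
  have "\<Phi> (z + a/2) = \<Phi> (z - a/2)"
  proof (rule DERIV_isconst_end[of "z - a/2" "z + a/2" \<Phi>])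
    show "continuous_on {z - a/2..z + a/2} \<Phi>"
      using d\<Phi> by (meson DERIV_continuous continuous_at_imp_continuous_on)
    show "(\<Phi> has_real_derivative 0) (at t)" if "z - a/2 < t" "t < z + a/2" for t
      using d\<Phi>[of t] lin[OF that] by simp
  qed (use \<open>a > 0\<close> in simp)
  then show ?thesis by (simp add: \<Phi>_def power2_eq_square field_simps)
qed

lemma diff_functional_at_kink:
  assumes F: "\<And>j x. j < m \<Longrightarrow> (F j has_real_derivative F (Suc j) x) (at x)"
    and right: "\<And>x. y \<le> x \<Longrightarrow> x \<le> y + 3*d \<Longrightarrow> F m x = F m y + \<alpha> * (x - y)"
    and left: "\<And>x. y - 3*d \<le> x \<Longrightarrow> x \<le> y \<Longrightarrow> F m x = F m y + \<gamma> * (x - y)"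
    and "a > 0" and ma: "real (Suc m) * a \<le> 2 * d"
  shows "diff_functional d a (Suc m) (F 0) y = (\<gamma> - \<alpha>) * a ^ Suc m"
proof -
  have claim: "diff_functional d a k (F (m - k)) z = (\<gamma> - \<alpha>) * a^k * (z - y)"
    if "k \<le> m" "\<bar>z - y\<bar> \<le> d - real k * a / 2" for k z
    using that
  proof (induction k arbitrary: z)
    case 0
    then show ?case using diff_functional_0_kink[OF right left] by simp
  next
    case (Suc k)
    have "Suc (m - Suc k) = m - k" using Suc.prems by auto
    then have "(F (m - Suc k) has_real_derivative F (m - k) x) (at x)" for x
      using F[of "m - Suc k"] Suc.prems by simp
    moreover have "diff_functional d a k (F (m - k)) t = (\<gamma> - \<alpha>) * a^k * (t - y)"
      if "z - a/2 < t" "t < z + a/2" for t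
    proof -
      have "\<bar>t - y\<bar> \<le> d - real k * a / 2"
        using Suc.prems that by (auto simp: algebra_simps add_divide_distrib)
      then show ?thesis using Suc by simp
    qed
    ultimately have "diff_functional d a (Suc k) (F (m - Suc k)) z = (\<gamma> - \<alpha>) * a^k * a * (z - y)"
      by (rule diff_functional_Suc_linear[OF _ \<open>a > 0\<close>])
    then show ?case by (simp add: mult_ac)
  qed
  have "diff_functional d a (Suc m) (F 0) y =
      diff_functional d a m (F (m - m)) (y + a/2) - diff_functional d a m (F (m - m)) (y - a/2)"
    by simp
  also have "\<dots> = (\<gamma> - \<alpha>) * a ^ Suc m"
    using claim[of m "y + a/2"] claim[of m "y - a/2"] ma \<open>a > 0\<close>
    by (simp add: algebra_simps add_divide_distrib)
  finally show ?thesis .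
qed

section \<open>Periodic functions\<close>

definition reduce_2pi :: "real \<Rightarrow> real \<Rightarrow> real" where
  "reduce_2pi c x = x - of_int \<lfloor>(x - c) / (2*pi)\<rfloor> * (2*pi)"

lemma reduce_2pi_bounds: "c \<le> reduce_2pi c x" "reduce_2pi c x < c + 2*pi"
proof -
  define k where "k = \<lfloor>(x - c) / (2*pi)\<rfloor>"
  have "of_int k \<le> (x - c) / (2*pi)" "(x - c) / (2*pi) < of_int k + 1"
    unfolding k_def by linarith+
  then have "of_int k * (2*pi) \<le> x - c" "x - c < of_int k * (2*pi) + 2*pi"
    by (simp_all add: field_simps)
  then show "c \<le> reduce_2pi c x" "reduce_2pi c x < c + 2*pi"
    by (simp_all add: reduce_2pi_def k_def[symmetric])
qed

lemma reduce_2pi_plus_of_int: "reduce_2pi c (x + of_int k * (2*pi)) = reduce_2pi c x"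
proof -
  have "(x + of_int k * (2*pi) - c) / (2*pi) = (x - c) / (2*pi) + of_int k"
    by (simp add: field_simps)
  then show ?thesis by (simp add: reduce_2pi_def algebra_simps)
qed

lemma reduce_2pi_eq_self: "c \<le> x \<Longrightarrow> x < c + 2*pi \<Longrightarrow> reduce_2pi c x = x"
  by (simp add: reduce_2pi_def floor_eq_iff field_simps)

lemma reduce_2pi_eq_minus_of_int:
  assumes "c + of_int k * (2*pi) \<le> x" "x < c + of_int k * (2*pi) + 2*pi"
  shows "reduce_2pi c x = x - of_int k * (2*pi)"
  using reduce_2pi_plus_of_int[of c "x - of_int k * (2*pi)" k]
    reduce_2pi_eq_self[of c "x - of_int k * (2*pi)"] assms
  by simp

lemma periodic_2pi_plus_of_int:
  assumes "periodic_2pi g"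
  shows "g (x + of_int k * (2*pi)) = g x"
proof -
  interpret periodic_fun_simple g "2*pi"
    using assms by unfold_locales (simp add: periodic_2pi_def)
  show ?thesis by (rule plus_of_int)
qed

lemma periodic_2pi_reduce: "periodic_2pi g \<Longrightarrow> g (reduce_2pi c x) = g x"
  using periodic_2pi_plus_of_int[of g "reduce_2pi c x" "\<lfloor>(x - c) / (2*pi)\<rfloor>"]
  by (simp add: reduce_2pi_def)

lemma periodic_2pi_bounded:
  assumes "continuous_on UNIV g" "periodic_2pi g"
  obtains M where "\<And>x. \<bar>g x\<bar> \<le> M"
proof -
  have "compact (g ` {0..2*pi})"
    using assms(1) by (intro compact_continuous_image) (auto intro: continuous_on_subset)
  then obtain M where M: "\<And>x. x \<in> {0..2*pi} \<Longrightarrow> \<bar>g x\<bar> \<le> M"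
    by (meson compact_imp_bounded bounded_real image_eqI)
  have "\<bar>g x\<bar> \<le> M" for x
    using M[of "reduce_2pi 0 x"] reduce_2pi_bounds[of 0 x] periodic_2pi_reduce[OF assms(2)] by simp
  then show ?thesis by (rule that)
qed

lemma abs_le_sup_norm:
  assumes "continuous_on UNIV g" "periodic_2pi g"
  shows "\<bar>g x\<bar> \<le> sup_norm g"
proof -
  obtain M where "\<And>x. \<bar>g x\<bar> \<le> M" using periodic_2pi_bounded[OF assms] by blast
  then have "bdd_above (range (\<lambda>x. \<bar>g x\<bar>))" by (intro bdd_aboveI[of _ M]) auto
  then show ?thesis unfolding sup_norm_def by (rule cSup_upper[rotated]) simp
qed

lemma periodic_2pi_antiderivative:
  assumes "continuous_on UNIV G" "periodic_2pi G"
  obtains B \<kappa> where "\<And>x. (B has_real_derivative G x - \<kappa>) (at x)" "periodic_2pi B"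
proof -
  obtain F where F: "\<And>x. (F has_real_derivative G x) (at x)"
    using einterval_antiderivative[of "-\<infinity>" "\<infinity>" G] assms(1)
    by (auto simp: continuous_on_eq_continuous_at has_real_derivative_iff_has_vector_derivative)
  define \<Delta> where "\<Delta> x = F (x + 2*pi) - F x" for x
  have "((\<lambda>x. F (x + 2*pi)) has_real_derivative G (x + 2*pi)) (at x)" for x
    using F DERIV_shift by blast
  then have "(\<Delta> has_real_derivative G (x + 2*pi) - G x) (at x)" for x
    unfolding \<Delta>_def by (intro DERIV_diff F)
  then have "(\<Delta> has_real_derivative 0) (at x)" for x
    using assms(2) by (simp add: periodic_2pi_def)
  then have \<Delta>: "\<Delta> x = \<Delta> 0" for x using DERIV_isconst_all by blast
  define \<kappa> where "\<kappa> = \<Delta> 0 / (2*pi)"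
  show ?thesis
  proof
    show "((\<lambda>x. F x - \<kappa> * x) has_real_derivative G x - \<kappa>) (at x)" for x
      using F by (auto intro!: derivative_eq_intros)
    show "periodic_2pi (\<lambda>x. F x - \<kappa> * x)"
      unfolding periodic_2pi_def
    proof
      fix x
      have "F (x + 2*pi) - F x = 2*pi * \<kappa>" using \<Delta>[of x] by (simp add: \<Delta>_def \<kappa>_def)
      then show "F (x + 2*pi) - \<kappa> * (x + 2*pi) = F x - \<kappa> * x" by (simp add: algebra_simps)
    qed
  qed
qed

lemma periodic_primitive_chain:
  assumes "continuous_on UNIV G" "periodic_2pi G"
  shows "\<exists>F c. (\<forall>x. F m x = G x + c) \<and>
           (\<forall>j<m. \<forall>x. (F j has_real_derivative F (Suc j) x) (at x)) \<and>
           (\<forall>j\<le>m. periodic_2pi (F j) \<and> continuous_on UNIV (F j))"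
  using assms
proof (induction m arbitrary: G)
  case 0
  then show ?case by (intro exI[of _ "\<lambda>_. G"] exI[of _ 0]) auto
next
  case (Suc m)
  obtain B \<kappa> where B: "\<And>x. (B has_real_derivative G x - \<kappa>) (at x)" "periodic_2pi B"
    using periodic_2pi_antiderivative[OF Suc.prems] by blast
  have "continuous_on UNIV B"
    using B(1) by (meson DERIV_continuous continuous_at_imp_continuous_on)
  then obtain F c where F: "\<forall>x. F m x = B x + c"
      "\<forall>j<m. \<forall>x. (F j has_real_derivative F (Suc j) x) (at x)"
      "\<forall>j\<le>m. periodic_2pi (F j) \<and> continuous_on UNIV (F j)"
    using Suc.IH B(2) by blast
  define F' where "F' j = (if j \<le> m then F j else (\<lambda>x. G x - \<kappa>))" for j
  have "(F' j has_real_derivative F' (Suc j) x) (at x)" if "j < Suc m" for j x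
  proof (cases "j < m")
    case True
    then show ?thesis using F(2) by (simp add: F'_def)
  next
    case False
    then have "j = m" using that by simp
    have "F m = (\<lambda>x. B x + c)" using F(1) by auto
    then have "(F m has_real_derivative G x - \<kappa>) (at x)"
      using B(1)[of x] by (auto intro!: derivative_eq_intros)
    then show ?thesis using \<open>j = m\<close> by (simp add: F'_def)
  qed
  moreover have "periodic_2pi (F' j) \<and> continuous_on UNIV (F' j)" if "j \<le> Suc m" for j
    using F(3) Suc.prems that
    by (auto simp: F'_def periodic_2pi_def intro!: continuous_intros)
  moreover have "\<forall>x. F' (Suc m) x = G x + - \<kappa>" by (simp add: F'_def)
  ultimately show ?case by blast
qed

lemma lipschitz_on_if_derivative_bounded:
  assumes "\<And>x. (f has_real_derivative f' x) (at x)" "\<And>x. \<bar>f' x\<bar> \<le> B"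
  shows "B-lipschitz_on UNIV f"
proof (rule lipschitz_onI)
  show "dist (f x) (f z) \<le> B * dist x z" for x z
    using field_differentiable_bound[of UNIV f f' B x z] assms by (simp add: dist_real_def)
  show "B \<ge> 0" using assms(2)[of 0] by simp
qed

lemma periodic_2pi_family_bounded:
  fixes F :: "nat \<Rightarrow> real \<Rightarrow> real"
  assumes "\<forall>j\<le>m. periodic_2pi (F j) \<and> continuous_on UNIV (F j)"
  obtains B where "\<And>j x. j \<le> m \<Longrightarrow> \<bar>F j x\<bar> \<le> B"
proof -
  have "\<forall>j\<in>{..m}. \<exists>M. \<forall>x. \<bar>F j x\<bar> \<le> M"
    using assms by (metis atMost_iff periodic_2pi_bounded)
  then obtain M where M: "\<And>j x. j \<le> m \<Longrightarrow> \<bar>F j x\<bar> \<le> M j"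
    by (metis atMost_iff)
  show ?thesis
  proof
    fix j x assume "j \<le> m"
    have "\<bar>M j\<bar> \<le> (\<Sum>j\<le>m. \<bar>M j\<bar>)" using \<open>j \<le> m\<close> by (intro member_le_sum) auto
    then show "\<bar>F j x\<bar> \<le> (\<Sum>j\<le>m. \<bar>M j\<bar>)" using M[OF \<open>j \<le> m\<close>, of x] by linarith
  qed
qed

lemma normalized_periodic_primitive_chain:
  assumes lip: "L-lipschitz_on UNIV G" and "periodic_2pi G"
  obtains F \<mu> c where "\<mu> > 0" "\<And>x. F m x = \<mu> * (G x + c)"
    "\<And>j x. j < m \<Longrightarrow> (F j has_real_derivative F (Suc j) x) (at x)"
    "\<And>j. j \<le> m \<Longrightarrow> periodic_2pi (F j)"
    "\<And>j. j \<le> m \<Longrightarrow> 1-lipschitz_on UNIV (F j)"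
proof -
  obtain F c where F: "\<forall>x. F m x = G x + c"
      "\<forall>j<m. \<forall>x. (F j has_real_derivative F (Suc j) x) (at x)"
      "\<forall>j\<le>m. periodic_2pi (F j) \<and> continuous_on UNIV (F j)"
    using periodic_primitive_chain[OF lipschitz_on_continuous_on[OF lip] assms(2)] by blast
  obtain B where B: "\<And>j x. j \<le> m \<Longrightarrow> \<bar>F j x\<bar> \<le> B"
    by (rule periodic_2pi_family_bounded[OF F(3)]) (rule that)
  define \<mu> where "\<mu> = 1 / (\<bar>B\<bar> + L + 1)"
  have "L \<ge> 0" using lipschitz_on_nonneg[OF lip] .
  then have \<mu>: "\<mu> > 0" "\<mu> * \<bar>B\<bar> \<le> 1" "\<mu> * L \<le> 1" by (simp_all add: \<mu>_def field_simps)
  show ?thesis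
  proof
    show "\<mu> * F m x = \<mu> * (G x + c)" for x using F(1) by simp
    show "((\<lambda>x. \<mu> * F j x) has_real_derivative \<mu> * F (Suc j) x) (at x)" if "j < m" for j x
      using F(2) that by (auto intro!: derivative_eq_intros)
    show "periodic_2pi (\<lambda>x. \<mu> * F j x)" if "j \<le> m" for j
      using F(3) that by (simp add: periodic_2pi_def)
    show "1-lipschitz_on UNIV (\<lambda>x. \<mu> * F j x)" if "j \<le> m" for j
    proof (cases "j < m")
      case True
      have "\<bar>\<mu> * F (Suc j) x\<bar> \<le> \<mu> * \<bar>B\<bar>" for x
        using B[of "Suc j" x] True \<mu>(1) by (simp add: abs_mult mult_left_mono)
      then have "\<bar>\<mu> * F (Suc j) x\<bar> \<le> 1" for x
        using \<mu>(2) by (meson order_trans)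
      then show ?thesis
        using F(2) True
        by (intro lipschitz_on_if_derivative_bounded[where f' = "\<lambda>x. \<mu> * F (Suc j) x"])
           (auto intro!: derivative_eq_intros)
    next
      case False
      then have "(\<mu> * L)-lipschitz_on UNIV (\<lambda>x. \<mu> * F j x)"
        using that F(1) \<mu>(1) lipschitz_on_cmult_real_nonneg[OF lip, of \<mu>]
        by (simp add: distrib_left lipschitz_on_def dist_real_def)
      then show ?thesis using \<mu>(3) by (rule lipschitz_on_le)
    qed
  qed (use \<mu> in simp)
qed

definition periodic_ext :: "real \<Rightarrow> (real \<Rightarrow> real) \<Rightarrow> real \<Rightarrow> real" where
  "periodic_ext c h x = h (reduce_2pi c x)"

lemma periodic_ext_periodic: "periodic_2pi (periodic_ext c h)"
  unfolding periodic_2pi_def periodic_ext_def using reduce_2pi_plus_of_int[of c _ 1] by simp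

lemma periodic_ext_eq:
  assumes "h c = h (c + 2*pi)" "c \<le> x" "x \<le> c + 2*pi"
  shows "periodic_ext c h x = h x"
proof (cases "x = c + 2*pi")
  case True
  have "reduce_2pi c (c + of_int 1 * (2*pi)) = c"
    unfolding reduce_2pi_plus_of_int by (simp add: reduce_2pi_eq_self)
  then show ?thesis using True assms(1) by (simp add: periodic_ext_def)
next
  case False
  then show ?thesis using assms(2,3) by (simp add: periodic_ext_def reduce_2pi_eq_self)
qed

lemma periodic_ext_lipschitz:
  assumes lip: "L-lipschitz_on {c..c + 2*pi} h" and per: "h c = h (c + 2*pi)"
  shows "L-lipschitz_on UNIV (periodic_ext c h)"
proof (rule lipschitz_on_leI)
  show "L \<ge> 0" using lipschitz_on_nonneg[OF lip] .
  fix x z :: real assume "x \<le> z"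
  define k where "k t = \<lfloor>(t - c) / (2*pi)\<rfloor>" for t
  have red: "reduce_2pi c t = t - of_int (k t) * (2*pi)" for t by (simp add: reduce_2pi_def k_def)
  have k: "k x \<le> k z" unfolding k_def using \<open>x \<le> z\<close> by (intro floor_mono divide_right_mono) auto
  have in_period: "reduce_2pi c t \<in> {c..c + 2*pi}" for t using reduce_2pi_bounds[of c t] by simp
  have h_lip: "\<bar>h u - h v\<bar> \<le> L * \<bar>u - v\<bar>" if "u \<in> {c..c + 2*pi}" "v \<in> {c..c + 2*pi}" for u v
    using lipschitz_onD[OF lip that] by (simp add: dist_real_def)
  show "dist (periodic_ext c h x) (periodic_ext c h z) \<le> L * dist x z"
  proof (cases "k x = k z")
    case True
    then have "reduce_2pi c x - reduce_2pi c z = x - z" by (simp add: red)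
    then show ?thesis
      using h_lip[OF in_period[of x] in_period[of z]] by (simp add: periodic_ext_def dist_real_def)
  next
    case False
    then have "of_int (k x + 1) \<le> (of_int (k z) :: real)" using k by simp
    then have "of_int (k x) * (2*pi) + 2*pi \<le> of_int (k z) * (2*pi)"
      using mult_right_mono[of "of_int (k x + 1)" "of_int (k z)" "2*pi"]
      by (simp add: algebra_simps)
    then have gap: "(c + 2*pi - reduce_2pi c x) + (reduce_2pi c z - c) \<le> z - x"
      by (simp add: red)
    have "\<bar>h (reduce_2pi c x) - h (reduce_2pi c z)\<bar>
        \<le> \<bar>h (reduce_2pi c x) - h (c + 2*pi)\<bar> + \<bar>h c - h (reduce_2pi c z)\<bar>"
      using per by simp
    also have "\<dots> \<le> L * (c + 2*pi - reduce_2pi c x) + L * (reduce_2pi c z - c)"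
      using h_lip[of "reduce_2pi c x" "c + 2*pi"] h_lip[of c "reduce_2pi c z"]
        in_period[of x] in_period[of z] reduce_2pi_bounds[of c x] reduce_2pi_bounds[of c z]
      by simp
    also have "\<dots> \<le> L * (z - x)"
      using gap \<open>L \<ge> 0\<close> by (simp add: mult_left_mono flip: distrib_left)
    finally show ?thesis using \<open>x \<le> z\<close> by (simp add: periodic_ext_def dist_real_def)
  qed
qed

lemma periodic_ext_has_real_derivative:
  assumes "c < reduce_2pi c x" "(h has_real_derivative D) (at (reduce_2pi c x))"
  shows "(periodic_ext c h has_real_derivative D) (at x)"
proof -
  define k where "k = \<lfloor>(x - c) / (2*pi)\<rfloor>"
  define S where "S = {c + of_int k * (2*pi)<..<c + of_int k * (2*pi) + 2*pi}"
  have red: "reduce_2pi c x = x - of_int k * (2*pi)" by (simp add: reduce_2pi_def k_def)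
  have "x \<in> S" using assms(1) reduce_2pi_bounds[of c x] by (simp add: S_def red)
  have "((\<lambda>t. h (t - of_int k * (2*pi))) has_real_derivative D) (at x)"
    using assms(2) DERIV_shift[of h D x "- of_int k * (2*pi)"] by (simp add: red)
  moreover have "h (t - of_int k * (2*pi)) = periodic_ext c h t" if "t \<in> S" for t
    using that reduce_2pi_eq_minus_of_int[of c k t] by (simp add: S_def periodic_ext_def)
  ultimately show ?thesis
    using has_field_derivative_transform_within_open[OF _ _ \<open>x \<in> S\<close>] by (simp add: S_def)
qed

section \<open>The functional on trigonometric polynomials in Delta_q\<close>

lemma trig_poly_derivative_chain:
  assumes "trig_poly n T"
  obtains D where "D 0 = T" "\<And>j x. (D j has_real_derivative D (Suc j) x) (at x)"
proof -
  obtain a b where T: "\<And>x. T x = a 0 + (\<Sum>k=1..n. a k * cos (real k * x) + b k * sin (real k * x))"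
    using assms unfolding trig_poly_def by blast
  define D where "D j x = (if j = 0 then a 0 else 0) +
      (\<Sum>k=1..n. real k ^ j * (a k * cos (real k * x + real j * pi / 2)
                               + b k * sin (real k * x + real j * pi / 2)))" for j x
  have quarter: "real (Suc j) * pi / 2 = real j * pi / 2 + pi / 2" for j
    by (simp add: field_simps)
  show ?thesis
  proof
    show "D 0 = T" using T by (simp add: D_def fun_eq_iff)
    show "(D j has_real_derivative D (Suc j) x) (at x)" for j x
      unfolding D_def quarter
      by (auto intro!: derivative_eq_intros DERIV_sum
               simp: cos_add sin_add add.assoc algebra_simps)
  qed
qed

lemma deriv_chain_unique:
  assumes "deriv_chain m S f g" "open S" "\<And>x. x \<in> S \<Longrightarrow> D 0 x = f x"
    and D: "\<And>j x. (D j has_real_derivative D (Suc j) x) (at x)"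
  shows "j \<le> m \<Longrightarrow> x \<in> S \<Longrightarrow> g j x = D j x"
proof (induction j arbitrary: x)
  case 0
  then show ?case using assms(1,3) by (simp add: deriv_chain_def)
next
  case (Suc j)
  have "(g j has_real_derivative g (Suc j) x) (at x)"
    using assms(1) Suc.prems by (simp add: deriv_chain_def)
  then have "(D j has_real_derivative g (Suc j) x) (at x)"
    by (rule has_field_derivative_transform_within_open[OF _ assms(2) Suc.prems(2)])
       (use Suc in auto)
  then show ?case using D DERIV_unique by blast
qed

lemma q_monotone_convex_on_Icc:
  assumes "q_monotone q l r f" "l < r" "\<And>x. x \<in> {l<..<r} \<Longrightarrow> D 0 x = f x"
    and D: "\<And>j x. (D j has_real_derivative D (Suc j) x) (at x)"
  shows "convex_on {l..r} (D (q - 2))"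
proof -
  obtain g where g: "deriv_chain (q - 2) {l<..<r} f g" "convex_on {l<..<r} (g (q - 2))"
    using assms(1) unfolding q_monotone_def by blast
  have "g (q - 2) x = D (q - 2) x" if "x \<in> {l<..<r}" for x
    using deriv_chain_unique[OF g(1) _ assms(3) D] that by simp
  then have "convex_on {l<..<r} (D (q - 2))"
    using g(2) unfolding convex_on_def by (metis convex_def)
  moreover have "continuous_on {l..r} (D (q - 2))"
    using D by (meson DERIV_continuous continuous_at_imp_continuous_on)
  ultimately show ?thesis by (rule convex_on_Icc_if_convex_on_open[OF assms(2)])
qed

lemma Delta_q_trig_poly_diff_functional_nonneg:
  assumes "Delta_q q s y T" "trig_poly n T" "s \<ge> 1" "y 2 < y 1" "y 1 < y 0"
    and "y 1 + 3*d \<le> y 0" "y 2 \<le> y 1 - 3*d" "a \<ge> 0" "real (q - 2) * a \<le> 2*d"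
  shows "diff_functional d a (q - 2) T (y 1) \<ge> 0"
proof -
  obtain D where D: "D 0 = T" "\<And>j x. (D j has_real_derivative D (Suc j) x) (at x)"
    using trig_poly_derivative_chain[OF assms(2)] by blast
  have "q_monotone q (y i) (y (i - 1)) (\<lambda>x. (-1)^(i - 1) * T x)" if "i \<in> {1 .. 2 * s}" for i
    using assms(1) that unfolding Delta_q_def by blast
  from this[of 1] this[of 2]
  have "q_monotone q (y 1) (y 0) T" "q_monotone q (y 2) (y 1) (\<lambda>x. - T x)"
    using \<open>s \<ge> 1\<close> by simp_all
  moreover have "((\<lambda>x. - D j x) has_real_derivative - D (Suc j) x) (at x)" for j x
    using D(2) by (rule DERIV_minus)
  ultimately have "convex_on {y 1..y 0} (D (q - 2))" "convex_on {y 2..y 1} (\<lambda>x. - D (q - 2) x)"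
    using q_monotone_convex_on_Icc[of q "y 1" "y 0" T D]
      q_monotone_convex_on_Icc[of q "y 2" "y 1" "\<lambda>x. - T x" "\<lambda>j x. - D j x"]
      D assms(4,5) by simp_all
  then have "convex_on {y 1..y 1 + 3*d} (D (q - 2))" "concave_on {y 1 - 3*d..y 1} (D (q - 2))"
    using assms(6,7) by (auto simp: concave_on_def intro: convex_on_subset)
  then show ?thesis
    using diff_functional_nonneg_at_inflection[of "q - 2" D] D assms(8,9) by auto
qed

lemma E_q_ge_diff_functional:
  assumes "continuous_on UNIV f" "periodic_2pi f"
    and nonneg: "\<And>T. trig_poly n T \<Longrightarrow> Delta_q q s y T \<Longrightarrow> diff_functional d a k T x \<ge> 0"
  shows "- diff_functional d a k f x / (6 * 2^k) \<le> E_q n q s y f"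
  unfolding E_q_def
proof (rule cInf_greatest)
  have "trig_poly n (\<lambda>x. 0)"
    unfolding trig_poly_def by (intro exI[of _ "\<lambda>_. 0"]) simp
  moreover have "Delta_q q s y (\<lambda>x. 0)"
    unfolding Delta_q_def q_monotone_def deriv_chain_def
    by (auto simp: periodic_2pi_def convex_on_const intro!: exI[of _ "\<lambda>j x. 0"])
  ultimately show "{sup_norm (\<lambda>x. f x - T x) |T. trig_poly n T \<and> Delta_q q s y T} \<noteq> {}"
    by blast
next
  fix v assume "v \<in> {sup_norm (\<lambda>x. f x - T x) |T. trig_poly n T \<and> Delta_q q s y T}"
  then obtain T where T: "trig_poly n T" "Delta_q q s y T" and v: "v = sup_norm (\<lambda>x. f x - T x)"
    by blast
  have "continuous_on UNIV T" "periodic_2pi T" using T(2) by (auto simp: Delta_q_def)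
  then have "\<bar>f z - T z\<bar> \<le> v" for z
    unfolding v using assms(1,2)
    by (intro abs_le_sup_norm) (auto simp: periodic_2pi_def intro!: continuous_intros)
  then have "\<bar>diff_functional d a k (\<lambda>z. f z - T z) x\<bar> \<le> 6 * 2^k * v"
    by (rule abs_diff_functional_le)
  then have "- diff_functional d a k f x \<le> 6 * 2^k * v"
    using nonneg[OF T] by (simp add: diff_functional_diff)
  then show "- diff_functional d a k f x / (6 * 2^k) \<le> v"
    by (simp add: field_simps)
qed

section \<open>Criteria for W_class and Delta_q\<close>

lemma lipschitz_imp_locally_abs_cont:
  assumes "L-lipschitz_on UNIV g"
  shows "locally_abs_cont g"
  unfolding locally_abs_cont_def abs_cont_on_def
proof (intro allI impI)
  fix a b \<epsilon> :: real
  assume "\<epsilon> > 0"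
  have "L \<ge> 0" using lipschitz_on_nonneg[OF assms] .
  show "\<exists>\<delta>>0. \<forall>(n::nat) u v. (\<forall>k<n. a \<le> u k \<and> u k \<le> v k \<and> v k \<le> b) \<and>
          (\<forall>i<n. \<forall>j<n. i \<noteq> j \<longrightarrow> v i \<le> u j \<or> v j \<le> u i) \<and> (\<Sum>k<n. v k - u k) < \<delta> \<longrightarrow>
          (\<Sum>k<n. \<bar>g (v k) - g (u k)\<bar>) < \<epsilon>"
  proof (intro exI conjI allI impI)
    show "\<epsilon> / (L + 1) > 0" using \<open>\<epsilon> > 0\<close> \<open>L \<ge> 0\<close> by simp
    fix n :: nat and u v :: "nat \<Rightarrow> real"
    assume H: "(\<forall>k<n. a \<le> u k \<and> u k \<le> v k \<and> v k \<le> b) \<and>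
        (\<forall>i<n. \<forall>j<n. i \<noteq> j \<longrightarrow> v i \<le> u j \<or> v j \<le> u i) \<and> (\<Sum>k<n. v k - u k) < \<epsilon> / (L + 1)"
    have "\<bar>g (v k) - g (u k)\<bar> \<le> L * (v k - u k)" if "k < n" for k
    proof -
      have "u k \<le> v k" using H that by blast
      then show ?thesis using lipschitz_onD[OF assms, of "v k" "u k"] by (simp add: dist_real_def)
    qed
    then have "(\<Sum>k<n. \<bar>g (v k) - g (u k)\<bar>) \<le> (\<Sum>k<n. L * (v k - u k))"
      by (intro sum_mono) auto
    also have "\<dots> = L * (\<Sum>k<n. v k - u k)" by (simp add: sum_distrib_left)
    also have "\<dots> \<le> L * (\<epsilon> / (L + 1))" using H \<open>L \<ge> 0\<close> by (intro mult_left_mono) auto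
    also have "\<dots> < \<epsilon>" using \<open>\<epsilon> > 0\<close> \<open>L \<ge> 0\<close> by (simp add: field_simps)
    finally show "(\<Sum>k<n. \<bar>g (v k) - g (u k)\<bar>) < \<epsilon>" .
  qed
qed

lemma lipschitz_has_real_derivative_bound:
  assumes "L-lipschitz_on UNIV g" "(g has_real_derivative D) (at x)"
  shows "\<bar>D\<bar> \<le> L"
proof -
  have "((\<lambda>h. \<bar>(g (x + h) - g x) / h\<bar>) \<longlongrightarrow> \<bar>D\<bar>) (at 0)"
    using assms(2) by (intro tendsto_rabs) (simp add: DERIV_def)
  moreover have "\<forall>\<^sub>F h in at 0. \<bar>(g (x + h) - g x) / h\<bar> \<le> L"
    using lipschitz_onD[OF assms(1), of "x + _" x]
    by (auto simp: eventually_at_filter dist_real_def divide_le_eq)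
  ultimately show ?thesis by (rule tendsto_upperbound) simp
qed

lemma W_class_primitive_chain:
  assumes "periodic_2pi (F 0)" "1 \<le> r" "r \<le> Suc m"
    and F: "\<And>j x. j < m \<Longrightarrow> (F j has_real_derivative F (Suc j) x) (at x)"
    and lip: "\<And>j. j \<le> m \<Longrightarrow> 1-lipschitz_on UNIV (F j)"
    and top: "AE x in lborel. F m differentiable (at x)"
  shows "W_class r (F 0)"
  unfolding W_class_def
proof (intro conjI exI[of _ F] allI impI)
  have "r - 1 \<le> m" using assms(3) by simp
  then have lip2: "2-lipschitz_on UNIV (F (r - 1))" by (rule lipschitz_on_le[OF lip]) simp
  then show "locally_abs_cont (F (r - 1))" by (rule lipschitz_imp_locally_abs_cont)
  have "AE x in lborel. F (r - 1) differentiable (at x)"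
  proof (cases "r - 1 < m")
    case True
    then show ?thesis using F by (intro AE_I2) (auto simp: real_differentiable_def)
  next
    case False
    then show ?thesis using top \<open>r - 1 \<le> m\<close> by (simp add: le_less)
  qed
  then show "AE x in lborel. \<exists>D. (F (r - 1) has_real_derivative D) (at x) \<and> \<bar>D\<bar> \<le> 2"
    by (rule eventually_mono)
       (use lipschitz_has_real_derivative_bound[OF lip2] in \<open>auto simp: real_differentiable_def\<close>)
qed (use assms(1,3) F in auto)

lemma Delta_qI_piecewise_affine:
  assumes "q \<ge> 3" "continuous_on UNIV (F 0)" "periodic_2pi (F 0)"
    and F: "\<And>j x. j < q - 3 \<Longrightarrow> (F j has_real_derivative F (Suc j) x) (at x)"
    and affine: "\<And>i. i \<in> {1 .. 2 * s} \<Longrightarrow>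
                   \<exists>\<sigma>. \<forall>x\<in>{y i<..<y (i - 1)}. (F (q - 3) has_real_derivative \<sigma>) (at x)"
  shows "Delta_q q s y (F 0)"
  unfolding Delta_q_def
proof (intro conjI ballI)
  fix i assume "i \<in> {1 .. 2 * s}"
  then obtain \<sigma> where \<sigma>: "\<And>x. x \<in> {y i<..<y (i - 1)} \<Longrightarrow> (F (q - 3) has_real_derivative \<sigma>) (at x)"
    using affine by blast
  define g where "g j x = (-1)^(i - 1) * (if j \<le> q - 3 then F j x else \<sigma>)" for j x
  have top: "g (q - 2) = (\<lambda>x. (-1)^(i - 1) * \<sigma>)"
    using \<open>q \<ge> 3\<close> by (auto simp: g_def fun_eq_iff)
  have "deriv_chain (q - 2) {y i<..<y (i - 1)} (\<lambda>x. (-1)^(i - 1) * F 0 x) g"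
    unfolding deriv_chain_def
  proof (intro conjI ballI allI impI)
    fix j x assume "j < q - 2" "x \<in> {y i<..<y (i - 1)}"
    moreover have "j < q - 3 \<or> j = q - 3" using \<open>j < q - 2\<close> by linarith
    ultimately have "(F j has_real_derivative (if Suc j \<le> q - 3 then F (Suc j) x else \<sigma>)) (at x)"
      using F \<sigma> by auto
    moreover have "g j = (\<lambda>x. (-1)^(i - 1) * F j x)"
      using \<open>j < q - 2\<close> by (auto simp: g_def fun_eq_iff)
    ultimately show "(g j has_real_derivative g (Suc j) x) (at x)"
      by (auto simp: g_def intro!: derivative_eq_intros)
  next
    show "continuous_on {y i<..<y (i - 1)} (g (q - 2))"
      unfolding top by simp
  qed (simp add: g_def)
  moreover have "convex_on {y i<..<y (i - 1)} (g (q - 2))"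
    unfolding top by (simp add: convex_on_const)
  moreover have "continuous_on {y i..y (i - 1)} (\<lambda>x. (-1)^(i - 1) * F 0 x)"
    using assms(2) by (auto intro!: continuous_intros intro: continuous_on_subset)
  ultimately show "q_monotone q (y i) (y (i - 1)) (\<lambda>x. (-1)^(i - 1) * F 0 x)"
    unfolding q_monotone_def by blast
qed (use assms in auto)

section \<open>The extremal function\<close>

definition sawtooth_slope :: "real \<Rightarrow> real \<Rightarrow> real" where
  "sawtooth_slope c y1 = (c + 2*pi - y1) / (y1 - c)"

definition sawtooth :: "real \<Rightarrow> real \<Rightarrow> real \<Rightarrow> real" where
  "sawtooth c y1 =
     periodic_ext c (\<lambda>x. if x \<le> y1 then sawtooth_slope c y1 * (c - x) else x - (c + 2*pi))"

context
  fixes c y1 :: real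
  assumes c_less: "c < y1" and less_period: "y1 < c + 2*pi"
begin

lemma sawtooth_slope_pos: "sawtooth_slope c y1 > 0"
  using c_less less_period by (simp add: sawtooth_slope_def)

lemma sawtooth_slope_meet: "sawtooth_slope c y1 * (c - y1) = y1 - (c + 2*pi)"
  using c_less by (simp add: sawtooth_slope_def field_simps)

lemma sawtooth_eq:
  assumes "c \<le> x" "x \<le> c + 2*pi"
  shows "sawtooth c y1 x = (if x \<le> y1 then sawtooth_slope c y1 * (c - x) else x - (c + 2*pi))"
  unfolding sawtooth_def using c_less less_period assms by (subst periodic_ext_eq) auto

lemma sawtooth_kink:
  "y1 \<le> x \<Longrightarrow> x \<le> c + 2*pi \<Longrightarrow> sawtooth c y1 x = sawtooth c y1 y1 + (x - y1)"
  "c \<le> x \<Longrightarrow> x \<le> y1 \<Longrightarrow> sawtooth c y1 x = sawtooth c y1 y1 - sawtooth_slope c y1 * (x - y1)"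
  using sawtooth_eq[of x] sawtooth_eq[of y1] sawtooth_slope_meet c_less less_period
  by (auto simp: algebra_simps)

lemma sawtooth_periodic: "periodic_2pi (sawtooth c y1)"
  unfolding sawtooth_def by (rule periodic_ext_periodic)

lemma sawtooth_lipschitz: "(max (sawtooth_slope c y1) 1)-lipschitz_on UNIV (sawtooth c y1)"
proof -
  have "(sawtooth_slope c y1)-lipschitz_on {c..y1} (\<lambda>x. sawtooth_slope c y1 * (c - x))"
  proof (rule lipschitz_onI)
    fix x z :: real
    have "sawtooth_slope c y1 * (c - x) - sawtooth_slope c y1 * (c - z)
        = sawtooth_slope c y1 * (z - x)"
      by (simp add: algebra_simps)
    then show "dist (sawtooth_slope c y1 * (c - x)) (sawtooth_slope c y1 * (c - z))
        \<le> sawtooth_slope c y1 * dist x z"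
      using sawtooth_slope_pos by (simp add: dist_real_def abs_mult abs_minus_commute)
  qed (use sawtooth_slope_pos in simp)
  moreover have "1-lipschitz_on {y1..c + 2*pi} (\<lambda>x. x - (c + 2*pi))"
    by (intro lipschitz_onI) (auto simp: dist_real_def)
  ultimately show ?thesis
    unfolding sawtooth_def
    using c_less less_period sawtooth_slope_meet
    by (intro periodic_ext_lipschitz lipschitz_on_concat_max) auto
qed

lemma sawtooth_has_real_derivative:
  assumes "c < x" "x < c + 2*pi" "x \<noteq> y1"
  shows "(sawtooth c y1 has_real_derivative (if x < y1 then - sawtooth_slope c y1 else 1)) (at x)"
proof -
  define h where "h x = (if x \<le> y1 then sawtooth_slope c y1 * (c - x) else x - (c + 2*pi))" for x
  have "(h has_real_derivative (if x < y1 then - sawtooth_slope c y1 else 1)) (at x)"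
  proof (cases "x < y1")
    case True
    have "((\<lambda>t. sawtooth_slope c y1 * (c - t)) has_real_derivative - sawtooth_slope c y1) (at x)"
      by (auto intro!: derivative_eq_intros)
    then have "(h has_real_derivative - sawtooth_slope c y1) (at x)"
      by (rule has_field_derivative_transform_within_open[where S = "{..<y1}"])
         (use True in \<open>auto simp: h_def\<close>)
    then show ?thesis using True by simp
  next
    case False
    then have "y1 < x" using assms(3) by simp
    have "((\<lambda>t. t - (c + 2*pi)) has_real_derivative 1) (at x)"
      by (auto intro!: derivative_eq_intros)
    then have "(h has_real_derivative 1) (at x)"
      by (rule has_field_derivative_transform_within_open[where S = "{y1<..}"])
         (use \<open>y1 < x\<close> in \<open>auto simp: h_def\<close>)
    then show ?thesis using False by simp
  qed
  moreover have "reduce_2pi c x = x" using assms by (simp add: reduce_2pi_eq_self)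
  moreover have "sawtooth c y1 = periodic_ext c h" by (simp add: sawtooth_def h_def[abs_def])
  ultimately show ?thesis using assms(1) periodic_ext_has_real_derivative[of c x h] by simp
qed

lemma sawtooth_differentiable_AE: "AE x in lborel. sawtooth c y1 differentiable (at x)"
proof (rule AE_I')
  show "range (\<lambda>k::int. c + of_int k * (2*pi)) \<union> range (\<lambda>k::int. y1 + of_int k * (2*pi))
          \<in> null_sets lborel"
    by (intro countable_imp_null_set_lborel) auto
  show "{x \<in> space lborel. \<not> sawtooth c y1 differentiable (at x)}
          \<subseteq> range (\<lambda>k::int. c + of_int k * (2*pi)) \<union> range (\<lambda>k::int. y1 + of_int k * (2*pi))"
  proof (rule subsetI, rule ccontr)
    fix x
    assume x: "x \<in> {x \<in> space lborel. \<not> sawtooth c y1 differentiable (at x)}"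
      and not_kink: "x \<notin> range (\<lambda>k::int. c + of_int k * (2*pi))
                           \<union> range (\<lambda>k::int. y1 + of_int k * (2*pi))"
    define k where "k = \<lfloor>(x - c) / (2*pi)\<rfloor>"
    define w where "w = reduce_2pi c x"
    have x_eq: "x = w + of_int k * (2*pi)" by (simp add: w_def reduce_2pi_def k_def)
    have "w \<noteq> c" "w \<noteq> y1" using not_kink x_eq by auto
    moreover have "c \<le> w" "w < c + 2*pi" using reduce_2pi_bounds[of c x] by (simp_all add: w_def)
    ultimately obtain D where "(sawtooth c y1 has_real_derivative D) (at w)"
      using sawtooth_has_real_derivative[of w] by force
    then have "(sawtooth c y1 has_real_derivative D) (at x)"
      using DERIV_shift[of "sawtooth c y1" D w "of_int k * (2*pi)"]
        periodic_2pi_plus_of_int[OF sawtooth_periodic] by (simp add: x_eq)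
    then show False using x by (auto simp: real_differentiable_def)
  qed
qed

end

lemma decreasing_le:
  fixes y :: "nat \<Rightarrow> real"
  assumes "\<forall>i<N. y (Suc i) < y i" "i \<le> j" "j \<le> N"
  shows "y j \<le> y i"
  using assms(2,3)
proof (induction j)
  case (Suc j)
  show ?case
  proof (cases "i = Suc j")
    case False
    then have "y j \<le> y i" using Suc by simp
    moreover have "y (Suc j) < y j" using assms(1) Suc.prems by simp
    ultimately show ?thesis by simp
  qed simp
qed simp

lemma decreasing_first_points:
  fixes y :: "nat \<Rightarrow> real"
  assumes "\<forall>i<2 * s. y (Suc i) < y i" "s \<ge> 1"
  shows "y 1 < y 0" "y 2 < y 1" "y (2 * s) \<le> y 2"
  using assms(1)[rule_format, of 0] assms(1)[rule_format, of 1] decreasing_le[OF assms(1), of 2]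
    assms(2) by (simp_all add: numeral_2_eq_2)

lemma sawtooth_piecewise_affine:
  fixes y :: "nat \<Rightarrow> real"
  assumes "\<forall>i<2 * s. y (Suc i) < y i" "y 0 = y (2 * s) + 2*pi" "s \<ge> 1" "i \<in> {1 .. 2 * s}"
  shows "\<exists>\<sigma>. \<forall>x\<in>{y i<..<y (i - 1)}. (sawtooth (y (2 * s)) (y 1) has_real_derivative \<sigma>) (at x)"
proof -
  note y = decreasing_first_points[OF assms(1,3)]
  then have c: "y (2 * s) < y 1" "y 1 < y (2 * s) + 2*pi" using assms(2) by simp_all
  show ?thesis
  proof (cases "i = 1")
    case True
    have "(sawtooth (y (2 * s)) (y 1) has_real_derivative 1) (at x)" if "y 1 < x" "x < y 0" for x
      using sawtooth_has_real_derivative[OF c, of x] that c assms(2) by simp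
    then show ?thesis using True by (intro exI[of _ 1]) auto
  next
    case False
    then have "y (2 * s) \<le> y i" "y (i - 1) \<le> y 1"
      using decreasing_le[OF assms(1)] assms(4) by auto
    then have "(sawtooth (y (2 * s)) (y 1) has_real_derivative
                 - sawtooth_slope (y (2 * s)) (y 1)) (at x)"
      if "y i < x" "x < y (i - 1)" for x
      using sawtooth_has_real_derivative[OF c, of x] that c by simp
    then show ?thesis by (intro exI[of _ "- sawtooth_slope (y (2 * s)) (y 1)"]) auto
  qed
qed

lemma diff_functional_sawtooth_primitive_neg:
  assumes c: "c < y1" "y1 < c + 2*pi"
    and F: "\<And>j x. j < m \<Longrightarrow> (F j has_real_derivative F (Suc j) x) (at x)"
    and top: "\<And>x. F m x = \<mu> * (sawtooth c y1 x + \<beta>)" and "\<mu> > 0"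
    and "c \<le> y1 - 3*d" "y1 + 3*d \<le> c + 2*pi" "a > 0" "real (Suc m) * a \<le> 2*d"
  shows "diff_functional d a (Suc m) (F 0) y1 < 0"
proof -
  define \<kappa> where "\<kappa> = sawtooth_slope c y1"
  have "diff_functional d a (Suc m) (F 0) y1 = (- \<mu> * \<kappa> - \<mu>) * a ^ Suc m"
  proof (rule diff_functional_at_kink[where F = F and m = m])
    show "F m x = F m y1 + \<mu> * (x - y1)" if "y1 \<le> x" "x \<le> y1 + 3*d" for x
    proof -
      have "sawtooth c y1 x = sawtooth c y1 y1 + (x - y1)"
        using that sawtooth_kink(1)[OF c, of x] \<open>y1 + 3*d \<le> c + 2*pi\<close> by simp
      then have "F m x = \<mu> * (sawtooth c y1 y1 + (x - y1) + \<beta>)" by (simp add: top)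
      then show ?thesis by (simp add: top algebra_simps)
    qed
    show "F m x = F m y1 + - \<mu> * \<kappa> * (x - y1)" if "y1 - 3*d \<le> x" "x \<le> y1" for x
    proof -
      have "sawtooth c y1 x = sawtooth c y1 y1 - \<kappa> * (x - y1)"
        using that sawtooth_kink(2)[OF c, of x] \<open>c \<le> y1 - 3*d\<close> by (simp add: \<kappa>_def)
      then have "F m x = \<mu> * (sawtooth c y1 y1 - \<kappa> * (x - y1) + \<beta>)" by (simp add: top)
      then show ?thesis by (simp add: top algebra_simps)
    qed
  qed (use F assms(8,9) in auto)
  moreover have "- \<mu> * \<kappa> - \<mu> < 0"
    using mult_pos_pos[OF \<open>\<mu> > 0\<close> sawtooth_slope_pos[OF c]] \<open>\<mu> > 0\<close> by (simp add: \<kappa>_def)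
  ultimately show ?thesis using \<open>a > 0\<close> by (simp add: mult_neg_pos)
qed

lemma exists_Delta_q_W_class_diff_functional_neg:
  fixes y :: "nat \<Rightarrow> real"
  assumes q: "q \<ge> 3" and r: "1 \<le> r" "r \<le> q - 2" and s: "s \<ge> 1"
    and y: "\<forall>i<2 * s. y (Suc i) < y i" and period: "y 0 = y (2 * s) + 2*pi"
    and d: "a > 0" "real (q - 2) * a \<le> 2*d" "y 1 + 3*d \<le> y 0" "y (2 * s) \<le> y 1 - 3*d"
  shows "\<exists>f. Delta_q q s y f \<and> W_class r f \<and> diff_functional d a (q - 2) f (y 1) < 0"
proof -
  define c where "c = y (2 * s)"
  have c: "c < y 1" "y 1 < c + 2*pi"
    using decreasing_first_points[OF y s] period by (simp_all add: c_def)
  define G where "G = sawtooth c (y 1)"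
  obtain F \<mu> c0 where F: "\<mu> > 0" "\<And>x. F (q - 3) x = \<mu> * (G x + c0)"
      "\<And>j x. j < q - 3 \<Longrightarrow> (F j has_real_derivative F (Suc j) x) (at x)"
      "\<And>j. j \<le> q - 3 \<Longrightarrow> periodic_2pi (F j)"
      "\<And>j. j \<le> q - 3 \<Longrightarrow> 1-lipschitz_on UNIV (F j)"
    by (rule normalized_periodic_primitive_chain[OF sawtooth_lipschitz[OF c]
          sawtooth_periodic[OF c], where m = "q - 3", folded G_def])
       (rule that)
  have F_top: "F (q - 3) = (\<lambda>x. \<mu> * (G x + c0))" using F(2) by auto
  have "Delta_q q s y (F 0)"
  proof (rule Delta_qI_piecewise_affine[OF q])
    show "continuous_on UNIV (F 0)" using F(5)[of 0] by (simp add: lipschitz_on_continuous_on)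
    show "periodic_2pi (F 0)" using F(4) by simp
    show "(F j has_real_derivative F (Suc j) x) (at x)" if "j < q - 3" for j x
      using F(3) that .
    fix i assume "i \<in> {1 .. 2 * s}"
    then obtain \<sigma> where "\<And>x. x \<in> {y i<..<y (i - 1)} \<Longrightarrow> (G has_real_derivative \<sigma>) (at x)"
      using sawtooth_piecewise_affine[OF y period s] unfolding G_def c_def by blast
    then have "(F (q - 3) has_real_derivative \<mu> * \<sigma>) (at x)" if "x \<in> {y i<..<y (i - 1)}" for x
      unfolding F_top using that by (auto intro!: derivative_eq_intros)
    then show "\<exists>\<sigma>. \<forall>x\<in>{y i<..<y (i - 1)}. (F (q - 3) has_real_derivative \<sigma>) (at x)"
      by blast
  qed
  moreover have "W_class r (F 0)"
  proof (rule W_class_primitive_chain[where m = "q - 3"])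
    show "AE x in lborel. F (q - 3) differentiable (at x)"
      unfolding F_top using sawtooth_differentiable_AE[OF c, folded G_def]
      by (rule eventually_mono) (intro derivative_intros)
  qed (use F r q in auto)
  moreover have "diff_functional d a (Suc (q - 3)) (F 0) (y 1) < 0"
    using d period q
    by (intro diff_functional_sawtooth_primitive_neg[OF c, where F = F and \<mu> = \<mu> and \<beta> = c0])
       (auto simp: F G_def c_def)
  moreover have "Suc (q - 3) = q - 2" using q by simp
  ultimately show ?thesis by auto
qed

theorem corollary1p4:
  fixes q r s :: nat and y :: "nat \<Rightarrow> real"
  assumes "q \<ge> 3" and "r \<ge> 1" and "r \<le> q - 2" and "s \<ge> 1"
    and "\<forall>i<2 * s. y (Suc i) < y i"
    and "y 0 = y (2 * s) + 2 * pi"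
  shows "\<exists>f. Delta_q q s y f \<and> W_class r f \<and>
           (\<exists>C>0. \<forall>n\<ge>1. E_q n q s y f \<ge> C)"
proof -
  note y = decreasing_first_points[OF assms(5,4)]
  define d where "d = min (y 0 - y 1) (y 1 - y 2) / 3"
  define a where "a = 2 * d / real (q - 2)"
  have "d > 0" using y by (simp add: d_def)
  then have "a > 0" "real (q - 2) * a = 2 * d" using assms(1) by (simp_all add: a_def)
  moreover have "y 1 + 3*d \<le> y 0" "y 2 \<le> y 1 - 3*d" by (simp_all add: d_def)
  ultimately obtain f
    where f: "Delta_q q s y f" "W_class r f" "diff_functional d a (q - 2) f (y 1) < 0"
    using exists_Delta_q_W_class_diff_functional_neg[OF assms, of a d] y(3) by auto
  have "- diff_functional d a (q - 2) f (y 1) / (6 * 2^(q - 2)) \<le> E_q n q s y f" for n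
    using f(1) Delta_q_trig_poly_diff_functional_nonneg[OF _ _ assms(4) y(2,1)]
      \<open>y 1 + 3*d \<le> y 0\<close> \<open>y 2 \<le> y 1 - 3*d\<close> \<open>a > 0\<close> \<open>real (q - 2) * a = 2 * d\<close>
    by (intro E_q_ge_diff_functional) (auto simp: Delta_q_def)
  moreover have "- diff_functional d a (q - 2) f (y 1) / (6 * 2^(q - 2)) > 0"
    using f(3) by (simp add: divide_neg_pos)
  ultimately show ?thesis using f(1,2) by blast
qed

end
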